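(* Let $d\in\mathbb N$, let $\emptyset\neq\Theta\subset\mathbb R^d$ be an orientable $C^1$-hypersurface of positive reach, let $\mu\colon\mathbb R^d\to\mathbb R^d$ be intrinsic Lipschitz continuous on $\mathbb R^d\setminus\Theta$, and let $\mathfrak n\colon\Theta\to\mathbb R^d$ be a normal vector along $\Theta$. Then for every $x\in\Theta$ and every $s\in\{+,-\}$ the limit $\lim_{h\downarrow0}\mu(x+sh\,\mathfrak n(x))$ exists in $\mathbb R^d$.
   Context: $\|\cdot\|$ is the Euclidean norm. A nonempty $\Theta\subset\mathbb R^d$ is a $C^1$-hypersurface if for every $x\in\Theta$ there are open $U,V$ with $x\in U$ and a $C^1$-diffeomorphism $\phi\colon U\to V$ with $\phi(\Theta\cap U)=(\mathbb R^{d-1}\times\{0\})\cap V$ ($\{0\}$ if $d=1$). A normal vector along $\Theta$ is a continuous unit-length $\mathfrak n\colon\Theta\to\mathbb R^d$ orthogonal at each $x$ to every tangent vector $\gamma'(0)$ of a $C^1$-curve $\gamma$ in $\Theta$ with $\gamma(0)=x$; orientable means one exists. $\mathrm{reach}(\Theta)=\sup\{\varepsilon\ge0:$ every $x$ with $\inf_{y\in\Theta}\|x-y\|<\varepsilon$ has a unique nearest point in $\Theta\}$; positive reach means $\mathrm{reach}(\Theta)>0$. Intrinsic Lipschitz continuity on $A$: $\|f(x)-f(y)\|\le L\rho_A(x,y)$ for all $x,y\in A$, where $\rho_A(x,y)$ is the infimum of the lengths $l(\gamma)=\sup\sum_k\|\gamma(t_k)-\gamma(t_{k-1})\|$ of continuous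 curves $\gamma\colon[0,1]\to A$ from $x$ to $y$. *)

theory Defs
  imports "HOL-Analysis.Analysis"
begin

definition C1_on :: "'a::euclidean_space set \<Rightarrow> ('a \<Rightarrow> 'b::euclidean_space) \<Rightarrow> bool" where
  "C1_on U f \<longleftrightarrow> (\<exists>f'. (\<forall>x\<in>U. (f has_derivative blinfun_apply (f' x)) (at x)) \<and> continuous_on U f')"

definition C1_diffeo :: "('a::euclidean_space \<Rightarrow> 'a) \<Rightarrow> 'a set \<Rightarrow> 'a set \<Rightarrow> bool" where
  "C1_diffeo \<phi> U V \<longleftrightarrow> open U \<and> open V \<and> bij_betw \<phi> U V \<and> C1_on U \<phi> \<and> C1_on V (inv_into U \<phi>)"

(* C^1-hypersurface; the model hyperplane R^(d-1) x {0} is the coordinate hyperplane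
   orthogonal to a standard basis vector b (for d = 1 this is {0}) *)
definition C1_hypersurface :: "'a::euclidean_space set \<Rightarrow> bool" where
  "C1_hypersurface \<Theta> \<longleftrightarrow> \<Theta> \<noteq> {} \<and>
     (\<forall>x\<in>\<Theta>. \<exists>U V \<phi> b. x \<in> U \<and> C1_diffeo \<phi> U V \<and> b \<in> Basis \<and>
        \<phi> ` (\<Theta> \<inter> U) = {y. y \<bullet> b = 0} \<inter> V)"

definition C1_curve_on :: "real set \<Rightarrow> (real \<Rightarrow> 'a::euclidean_space) \<Rightarrow> (real \<Rightarrow> 'a) \<Rightarrow> bool" where
  "C1_curve_on I \<gamma> \<gamma>' \<longleftrightarrow> (\<forall>t\<in>I. (\<gamma> has_vector_derivative \<gamma>' t) (at t)) \<and> continuous_on I \<gamma>'"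

definition tangent_vector :: "'a::euclidean_space set \<Rightarrow> 'a \<Rightarrow> 'a \<Rightarrow> bool" where
  "tangent_vector \<Theta> x v \<longleftrightarrow> (\<exists>\<epsilon>>0. \<exists>\<gamma> \<gamma>'. C1_curve_on {-\<epsilon><..<\<epsilon>} \<gamma> \<gamma>' \<and>
      (\<forall>t\<in>{-\<epsilon><..<\<epsilon>}. \<gamma> t \<in> \<Theta>) \<and> \<gamma> 0 = x \<and> \<gamma>' 0 = v)"

definition normal_vector_along :: "'a::euclidean_space set \<Rightarrow> ('a \<Rightarrow> 'a) \<Rightarrow> bool" where
  "normal_vector_along \<Theta> n \<longleftrightarrow> continuous_on \<Theta> n \<and>
     (\<forall>x\<in>\<Theta>. norm (n x) = 1 \<and> (\<forall>v. tangent_vector \<Theta> x v \<longrightarrow> n x \<bullet> v = 0))"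

definition orientable :: "'a::euclidean_space set \<Rightarrow> bool" where
  "orientable \<Theta> \<longleftrightarrow> (\<exists>n. normal_vector_along \<Theta> n)"

definition reach :: "'a::euclidean_space set \<Rightarrow> ereal" where
  "reach \<Theta> = Sup (ereal ` {\<epsilon>. \<epsilon> \<ge> 0 \<and>
      (\<forall>x. infdist x \<Theta> < \<epsilon> \<longrightarrow> (\<exists>!y. y \<in> \<Theta> \<and> dist x y = infdist x \<Theta>))})"

definition curve_length :: "(real \<Rightarrow> 'a::euclidean_space) \<Rightarrow> ereal" where
  "curve_length \<gamma> = Sup {ereal (\<Sum>k<m. dist (\<gamma> (t (Suc k))) (\<gamma> (t k))) | m t.
      t 0 = 0 \<and> t m = 1 \<and> (\<forall>k<m. t k \<le> t (Suc k))}"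

(* intrinsic metric rho_A (infimum over continuous curves in A; +infinity if none) *)
definition intrinsic_dist :: "'a::euclidean_space set \<Rightarrow> 'a \<Rightarrow> 'a \<Rightarrow> ereal" where
  "intrinsic_dist A x y = Inf {curve_length \<gamma> | \<gamma>.
      continuous_on {0..1} \<gamma> \<and> \<gamma> ` {0..1} \<subseteq> A \<and> \<gamma> 0 = x \<and> \<gamma> 1 = y}"

definition intrinsic_lipschitz_on :: "'a::euclidean_space set \<Rightarrow> ('a \<Rightarrow> 'b::real_normed_vector) \<Rightarrow> bool" where
  "intrinsic_lipschitz_on A f \<longleftrightarrow> (\<exists>L\<ge>0. \<forall>x\<in>A. \<forall>y\<in>A.
      ereal (norm (f x - f y)) \<le> ereal L * intrinsic_dist A x y)"

end

theory Submission
  imports Defs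
begin

text \<open>
  The normal line through a point of a C1-hypersurface is transversal to it, so a short
  open piece of the half-line \<open>h \<mapsto> x + s h n(x)\<close>, \<open>h > 0\<close>, avoids the hypersurface.
  Along this segment the intrinsic distance of the complement is bounded by the Euclidean
  one, so \<open>\<mu>\<close> is Lipschitz, hence uniformly continuous, in \<open>h\<close>; by completeness it has a
  limit as \<open>h \<down> 0\<close>.
\<close>

lemma curve_length_linepath_le: "curve_length (linepath a b) \<le> ereal (dist a b)"
  unfolding curve_length_def
proof (rule Sup_least, clarify)
  fix m and t :: "nat \<Rightarrow> real"
  assume t0: "t 0 = 0" and tm: "t m = 1" and mono: "\<forall>k<m. t k \<le> t (Suc k)"
  have "(\<Sum>k<m. dist (linepath a b (t (Suc k))) (linepath a b (t k)))
      = (\<Sum>k<m. (t (Suc k) - t k) * norm (b - a))"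
  proof (rule sum.cong)
    fix k assume "k \<in> {..<m}"
    then have "t k \<le> t (Suc k)" using mono by auto
    have "linepath a b (t (Suc k)) - linepath a b (t k) = (t (Suc k) - t k) *\<^sub>R (b - a)"
      by (simp add: linepath_def algebra_simps)
    then show "dist (linepath a b (t (Suc k))) (linepath a b (t k))
        = (t (Suc k) - t k) * norm (b - a)"
      using \<open>t k \<le> t (Suc k)\<close> by (simp add: dist_norm)
  qed simp
  also have "\<dots> = dist a b"
    by (simp add: sum_distrib_right[symmetric] sum_lessThan_telescope t0 tm
        dist_norm norm_minus_commute)
  finally show "ereal (\<Sum>k<m. dist (linepath a b (t (Suc k))) (linepath a b (t k)))
      \<le> ereal (dist a b)"
    by simp
qed

lemma intrinsic_dist_le_dist:
  assumes "closed_segment a b \<subseteq> A"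
  shows "intrinsic_dist A a b \<le> ereal (dist a b)"
proof -
  have "continuous_on {0..1} (linepath a b)" "linepath a b ` {0..1} \<subseteq> A"
    "linepath a b 0 = a" "linepath a b 1 = b"
    using assms by (auto simp: linepath_image_01 linepath_0' linepath_1')
  then have "curve_length (linepath a b) \<in> {curve_length \<gamma> | \<gamma>.
      continuous_on {0..1} \<gamma> \<and> \<gamma> ` {0..1} \<subseteq> A \<and> \<gamma> 0 = a \<and> \<gamma> 1 = b}"
    by blast
  then have "intrinsic_dist A a b \<le> curve_length (linepath a b)"
    unfolding intrinsic_dist_def by (rule Inf_lower)
  also have "\<dots> \<le> ereal (dist a b)"
    by (rule curve_length_linepath_le)
  finally show ?thesis .
qed

lemma intrinsic_lipschitz_on_imp_lipschitz_on_convex: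
  assumes "intrinsic_lipschitz_on A f" "convex S" "S \<subseteq> A"
  shows "\<exists>L. L-lipschitz_on S f"
proof -
  obtain L where "L \<ge> 0" and lip: "\<And>x y. x \<in> A \<Longrightarrow> y \<in> A \<Longrightarrow>
      ereal (norm (f x - f y)) \<le> ereal L * intrinsic_dist A x y"
    using assms(1) unfolding intrinsic_lipschitz_on_def by blast
  have "L-lipschitz_on S f"
  proof (rule lipschitz_onI)
    fix x y assume "x \<in> S" "y \<in> S"
    then have "closed_segment x y \<subseteq> A"
      using assms(2,3) closed_segment_subset by blast
    then have "ereal L * intrinsic_dist A x y \<le> ereal L * ereal (dist x y)"
      using \<open>L \<ge> 0\<close> by (intro ereal_mult_left_mono intrinsic_dist_le_dist) auto
    with lip[of x y] \<open>x \<in> S\<close> \<open>y \<in> S\<close> assms(3)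
    have "ereal (norm (f x - f y)) \<le> ereal L * ereal (dist x y)"
      by (meson order_trans subsetD)
    then show "dist (f x) (f y) \<le> L * dist x y"
      by (simp add: dist_norm)
  qed fact
  then show ?thesis ..
qed

lemma uniformly_continuous_on_tendsto_at_right:
  fixes f :: "real \<Rightarrow> 'b::complete_space"
  assumes "uniformly_continuous_on {a<..<b} f" "a < b"
  shows "\<exists>l. (f \<longlongrightarrow> l) (at_right a)"
proof -
  have "a \<in> closure {a<..<b}" using assms(2) by simp
  then obtain l where "(f \<longlongrightarrow> l) (at a within {a<..<b})"
    using uniformly_continuous_on_extension_at_closure[OF assms(1)] by blast
  moreover have "at a within {a<..<b} = at_right a"
    by (rule at_within_nhd[of _ "{..<b}"]) (use assms(2) in auto)
  ultimately show ?thesis by auto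
qed

lemma intrinsic_lipschitz_on_tendsto_along_ray:
  fixes f :: "'a::euclidean_space \<Rightarrow> 'b::banach"
  assumes "intrinsic_lipschitz_on A f" "\<delta> > 0"
    and "\<And>h. h \<in> {0<..<\<delta>} \<Longrightarrow> x + h *\<^sub>R v \<in> A"
  shows "\<exists>l. ((\<lambda>h. f (x + h *\<^sub>R v)) \<longlongrightarrow> l) (at_right 0)"
proof -
  define P where "P h = x + h *\<^sub>R v" for h
  have P_lip: "(norm v)-lipschitz_on {0<..<\<delta>} P"
    by (intro lipschitz_onI)
      (auto simp: P_def dist_norm dist_real_def scaleR_diff_left[symmetric])
  have "P ` {0<..<\<delta>} = (+) x ` ((\<lambda>h. h *\<^sub>R v) ` {0<..<\<delta>})"
    by (auto simp: P_def image_image)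
  moreover have "convex ((\<lambda>h. h *\<^sub>R v) ` {0<..<\<delta>})"
    by (intro convex_linear_image bounded_linear.linear[OF bounded_linear_scaleR_left]) simp
  ultimately have convex: "convex (P ` {0<..<\<delta>})"
    by (simp add: convex_translation)
  have "P ` {0<..<\<delta>} \<subseteq> A"
    using assms(3) by (auto simp: P_def)
  then obtain L where "L-lipschitz_on (P ` {0<..<\<delta>}) f"
    using intrinsic_lipschitz_on_imp_lipschitz_on_convex[OF assms(1) convex] by blast
  from lipschitz_on_compose[OF P_lip this]
  have "uniformly_continuous_on {0<..<\<delta>} (f \<circ> P)"
    by (rule lipschitz_on_uniformly_continuous)
  from uniformly_continuous_on_tendsto_at_right[OF this \<open>\<delta> > 0\<close>]
  show ?thesis
    by (simp add: P_def o_def)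
qed

lemma DERIV_nonzero_imp_eventually_ne:
  fixes g :: "real \<Rightarrow> real"
  assumes "DERIV g a :> c" "c \<noteq> 0"
  shows "eventually (\<lambda>h. g h \<noteq> g a) (at a)"
proof -
  have "((\<lambda>h. (g h - g a) / (h - a)) \<longlongrightarrow> c) (at a)"
    using assms(1) by (simp add: has_field_derivative_iff)
  then have "eventually (\<lambda>h. (g h - g a) / (h - a) \<noteq> 0) (at a)"
    using assms(2) by (rule tendsto_imp_eventually_ne)
  then show ?thesis by (rule eventually_mono) auto
qed

lemma C1_curve_on_line_image:
  assumes "\<And>y. y \<in> V \<Longrightarrow> (f has_derivative blinfun_apply (f' y)) (at y)"
    and "continuous_on V f'"
    and "\<And>t. t \<in> I \<Longrightarrow> p + t *\<^sub>R w \<in> V"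
  shows "C1_curve_on I (\<lambda>t. f (p + t *\<^sub>R w)) (\<lambda>t. f' (p + t *\<^sub>R w) w)"
  unfolding C1_curve_on_def
proof
  show "\<forall>t\<in>I. ((\<lambda>t. f (p + t *\<^sub>R w)) has_vector_derivative f' (p + t *\<^sub>R w) w) (at t)"
  proof
    fix t assume "t \<in> I"
    have "((\<lambda>t. p + t *\<^sub>R w) has_derivative (\<lambda>h. h *\<^sub>R w)) (at t)"
      by (auto intro!: derivative_eq_intros)
    from diff_chain_at[OF this assms(1)[OF assms(3)[OF \<open>t \<in> I\<close>]]]
    show "((\<lambda>t. f (p + t *\<^sub>R w)) has_vector_derivative f' (p + t *\<^sub>R w) w) (at t)"
      by (simp add: has_vector_derivative_def o_def blinfun.scaleR_right)
  qed
  have "continuous_on I (\<lambda>t. f' (p + t *\<^sub>R w))"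
    by (rule continuous_on_compose2[OF assms(2)]) (auto intro!: continuous_intros assms(3))
  then show "continuous_on I (\<lambda>t. f' (p + t *\<^sub>R w) w)"
    by (auto intro!: continuous_intros)
qed

text \<open>The witnessing curve is the pull-back along the chart of a line in the model hyperplane.\<close>

lemma tangent_vector_of_chart:
  assumes chart: "C1_diffeo \<phi> U V" "x \<in> U" "\<phi> ` (\<Theta> \<inter> U) = {y. y \<bullet> b = 0} \<inter> V"
    and "x \<in> \<Theta>" and D: "(\<phi> has_derivative D) (at x)" and "D v \<bullet> b = 0"
  shows "tangent_vector \<Theta> x v"
proof -
  define \<psi> where "\<psi> = inv_into U \<phi>"
  have "open U" "open V" and bij: "bij_betw \<phi> U V"
    using chart(1) unfolding C1_diffeo_def by auto
  obtain \<psi>' where d\<psi>: "\<And>y. y \<in> V \<Longrightarrow> (\<psi> has_derivative blinfun_apply (\<psi>' y)) (at y)"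
    and "continuous_on V \<psi>'"
    using chart(1) unfolding C1_diffeo_def C1_on_def \<psi>_def by blast
  have \<psi>\<phi>: "\<psi> (\<phi> y) = y" if "y \<in> U" for y
    unfolding \<psi>_def using bij that by (simp add: bij_betw_def)
  have "\<phi> x \<in> V" using bij chart(2) by (auto simp: bij_betw_def)
  have "\<psi>' (\<phi> x) \<circ> D = id"
  proof (rule has_derivative_unique)
    show "((\<psi> \<circ> \<phi>) has_derivative (\<psi>' (\<phi> x) \<circ> D)) (at x)"
      by (rule diff_chain_at[OF D d\<psi>[OF \<open>\<phi> x \<in> V\<close>]])
    show "((\<psi> \<circ> \<phi>) has_derivative id) (at x)"
      by (rule has_derivative_transform_within_open[OF has_derivative_id \<open>open U\<close> chart(2)])
        (simp add: \<psi>\<phi>)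
  qed
  then have "\<psi>' (\<phi> x) (D v) = v"
    by (metis comp_apply id_apply)
  have "open ((\<lambda>t::real. \<phi> x + t *\<^sub>R D v) -` V)"
    by (rule continuous_open_vimage[OF \<open>open V\<close>]) (auto intro!: continuous_intros)
  moreover have "0 \<in> (\<lambda>t. \<phi> x + t *\<^sub>R D v) -` V"
    using \<open>\<phi> x \<in> V\<close> by simp
  ultimately obtain \<epsilon> where "\<epsilon> > 0" and "ball 0 \<epsilon> \<subseteq> (\<lambda>t. \<phi> x + t *\<^sub>R D v) -` V"
    by (rule openE)
  then have inV: "\<phi> x + t *\<^sub>R D v \<in> V" if "t \<in> {-\<epsilon><..<\<epsilon>}" for t
    using that by (auto simp: ball_eq_greaterThanLessThan)
  have "\<psi> (\<phi> x + t *\<^sub>R D v) \<in> \<Theta>" if "t \<in> {-\<epsilon><..<\<epsilon>}" for t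
  proof -
    have "\<phi> x + t *\<^sub>R D v \<in> \<phi> ` (\<Theta> \<inter> U)"
      using chart inV[OF that] \<open>x \<in> \<Theta>\<close> \<open>D v \<bullet> b = 0\<close> by (auto simp: inner_add_left)
    then show ?thesis using \<psi>\<phi> by auto
  qed
  moreover have "C1_curve_on {-\<epsilon><..<\<epsilon>}
      (\<lambda>t. \<psi> (\<phi> x + t *\<^sub>R D v)) (\<lambda>t. \<psi>' (\<phi> x + t *\<^sub>R D v) (D v))"
    by (rule C1_curve_on_line_image[OF d\<psi> \<open>continuous_on V \<psi>'\<close> inV])
  ultimately show ?thesis
    unfolding tangent_vector_def
    using \<open>\<epsilon> > 0\<close> \<open>\<psi>' (\<phi> x) (D v) = v\<close> \<psi>\<phi>[OF chart(2)]
    by (intro exI[of _ \<epsilon>] conjI exI[of _ "\<lambda>t. \<psi> (\<phi> x + t *\<^sub>R D v)"]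
        exI[of _ "\<lambda>t. \<psi>' (\<phi> x + t *\<^sub>R D v) (D v)"]) auto
qed

lemma normal_vector_not_tangent:
  assumes "normal_vector_along \<Theta> n" "x \<in> \<Theta>"
  shows "\<not> tangent_vector \<Theta> x (n x)"
  using assms unfolding normal_vector_along_def
  by (metis norm_eq_sqrt_inner real_sqrt_zero zero_neq_one)

text \<open>
  In a chart, the \<open>b\<close>-coordinate \<open>g\<close> of the image of the normal line has \<open>g 0 = 0\<close>
  and \<open>g' 0 \<noteq> 0\<close>, since otherwise the normal vector would be tangent; so \<open>g\<close> has an
  isolated zero at \<open>0\<close>.
\<close>

lemma C1_hypersurface_normal_line_eventually_off:
  assumes hyp: "C1_hypersurface \<Theta>" and nv: "normal_vector_along \<Theta> n" and "x \<in> \<Theta>"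
  shows "eventually (\<lambda>t. x + t *\<^sub>R n x \<notin> \<Theta>) (at 0)"
proof -
  obtain U V \<phi> b where "x \<in> U" and chart: "C1_diffeo \<phi> U V"
    and img: "\<phi> ` (\<Theta> \<inter> U) = {y. y \<bullet> b = 0} \<inter> V"
    using hyp \<open>x \<in> \<Theta>\<close> unfolding C1_hypersurface_def by blast
  have "open U" using chart unfolding C1_diffeo_def by simp
  obtain \<phi>' where d\<phi>: "(\<phi> has_derivative blinfun_apply (\<phi>' x)) (at x)"
    using chart \<open>x \<in> U\<close> unfolding C1_diffeo_def C1_on_def by blast
  define g where "g h = \<phi> (x + h *\<^sub>R n x) \<bullet> b" for h
  have "g 0 = 0" using img \<open>x \<in> \<Theta>\<close> \<open>x \<in> U\<close> by (auto simp: g_def)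
  have "((\<lambda>h. x + h *\<^sub>R n x) has_derivative (\<lambda>h. h *\<^sub>R n x)) (at 0)"
    by (auto intro!: derivative_eq_intros)
  from diff_chain_at[OF this, of \<phi>] d\<phi>
  have "((\<lambda>h. \<phi> (x + h *\<^sub>R n x)) has_derivative (\<lambda>h. \<phi>' x (h *\<^sub>R n x))) (at 0)"
    by (simp add: o_def)
  from bounded_linear.has_derivative[OF bounded_linear_inner_left[of b] this]
  have "DERIV g 0 :> \<phi>' x (n x) \<bullet> b"
    unfolding g_def has_field_derivative_def
    by (rule has_derivative_eq_rhs) (auto simp: blinfun.scaleR_right fun_eq_iff)
  moreover have "\<phi>' x (n x) \<bullet> b \<noteq> 0"
    using tangent_vector_of_chart[OF chart \<open>x \<in> U\<close> img \<open>x \<in> \<Theta>\<close> d\<phi>]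
      normal_vector_not_tangent[OF nv \<open>x \<in> \<Theta>\<close>]
    by blast
  ultimately have "eventually (\<lambda>h. g h \<noteq> g 0) (at 0)"
    by (rule DERIV_nonzero_imp_eventually_ne)
  moreover have "eventually (\<lambda>h. x + h *\<^sub>R n x \<in> U) (at 0)"
    by (rule topological_tendstoD[OF _ \<open>open U\<close> \<open>x \<in> U\<close>]) (auto intro!: tendsto_eq_intros)
  ultimately show ?thesis
    by eventually_elim (use img \<open>g 0 = 0\<close> in \<open>auto simp: g_def\<close>)
qed

theorem lemma2:
  fixes \<Theta> :: "'a::euclidean_space set"
    and \<mu> :: "'a \<Rightarrow> 'a"
    and n :: "'a \<Rightarrow> 'a"
  assumes "C1_hypersurface \<Theta>"
    and "orientable \<Theta>"
    and "reach \<Theta> > 0"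
    and "intrinsic_lipschitz_on (UNIV - \<Theta>) \<mu>"
    and "normal_vector_along \<Theta> n"
  shows "\<forall>x\<in>\<Theta>. \<forall>s\<in>{1, -1::real}.
           \<exists>l. ((\<lambda>h. \<mu> (x + (s * h) *\<^sub>R n x)) \<longlongrightarrow> l) (at_right 0)"
proof (intro ballI)
  fix x s assume "x \<in> \<Theta>" and s: "s \<in> {1, -1::real}"
  obtain \<delta> where "\<delta> > 0" and off: "\<And>t. t \<noteq> 0 \<Longrightarrow> \<bar>t\<bar> < \<delta> \<Longrightarrow> x + t *\<^sub>R n x \<notin> \<Theta>"
    using C1_hypersurface_normal_line_eventually_off[OF assms(1,5) \<open>x \<in> \<Theta>\<close>]
    unfolding eventually_at by (auto simp: dist_real_def)
  have "x + h *\<^sub>R (s *\<^sub>R n x) \<in> UNIV - \<Theta>" if "h \<in> {0<..<\<delta>}" for h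
    using off[of "s * h"] that s by (auto simp: abs_mult)
  from intrinsic_lipschitz_on_tendsto_along_ray[OF assms(4) \<open>\<delta> > 0\<close> this]
  show "\<exists>l. ((\<lambda>h. \<mu> (x + (s * h) *\<^sub>R n x)) \<longlongrightarrow> l) (at_right 0)"
    by (simp add: mult.commute)
qed

end
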